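(* Let $M$ be a three-dimensional warped product space with Euclidean coordinates $(z^1,z^2,z^3)$ on the underlying $\mathbb{R}^3$, and let $\vec r$ be a surface in $M$ (with position vector $\vec r$). For $\alpha=1,2,3$ let $E_\alpha=\frac{\partial}{\partial z^\alpha}\times_E\vec r$, where $\times_E$ is the Euclidean cross product. Then each $E_\alpha$ satisfies $$\vec r_i\cdot D_jE_\alpha+\vec r_j\cdot D_iE_\alpha=0\quad\text{for all }i,j,$$ and moreover $E_\alpha=\frac{\partial}{\partial z^\alpha}\times X$, where $X=rf(r)\frac{\partial}{\partial r}$ and $\times$ is the cross product induced by the warped metric (with the same orientation).
   Context: A three-dimensional warped product space is (a region of) $\mathbb{R}^3$ with polar coordinates $(r,\theta)$ and metric $ds^2=\frac{1}{f(r)^2}dr^2+r^2dS_2^2$ ($dS_2^2$ round metric, $f$ smooth and positive); $\cdot$ is this metric, $D$ its Levi-Civita connection, $\vec r_i=\partial \vec r/\partial x^i$ in local coordinates on the surface. The cross product $\times$ induced by $\cdot$ is the unique bilinear map with $a\times b\perp a,b$, $|a\times b|^2=|a|^2|b|^2-(a\cdot b)^2$, and $(a,b,a\times b)$ positively oriented for independent $a,b$. *)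

theory Defs
  imports "HOL-Analysis.Analysis" "HOL-Analysis.Cross3"
begin

text \<open>A Riemannian metric on (a region of) R^3 in the Euclidean coordinates z,
  given pointwise as a bilinear form: g p v w.\<close>

type_synonym metric3 = "real^3 \<Rightarrow> real^3 \<Rightarrow> real^3 \<Rightarrow> real"

text \<open>The warped product metric ds^2 = dr^2/f(r)^2 + r^2 dS_2^2, written in the
  Euclidean coordinates z (r = norm z, dr = (z/r) . dz, r^2 dS^2 = |dz|^2 - dr^2).\<close>
definition warped_metric :: "(real \<Rightarrow> real) \<Rightarrow> metric3" where
  "warped_metric f p v w =
     (1 / (f (norm p))\<^sup>2) * ((p \<bullet> v) * (p \<bullet> w)) / (norm p)\<^sup>2
     + (v \<bullet> w - ((p \<bullet> v) * (p \<bullet> w)) / (norm p)\<^sup>2)"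

definition metric_matrix :: "metric3 \<Rightarrow> real^3 \<Rightarrow> real^3^3" where
  "metric_matrix g p = (\<chi> i j. g p (axis i 1) (axis j 1))"

definition metric_deriv :: "metric3 \<Rightarrow> real^3 \<Rightarrow> real^3 \<Rightarrow> real^3 \<Rightarrow> real^3 \<Rightarrow> real" where
  "metric_deriv g p u a b = frechet_derivative (\<lambda>q. g q a b) (at p) u"

definition christoffel :: "metric3 \<Rightarrow> real^3 \<Rightarrow> real^3 \<Rightarrow> real^3 \<Rightarrow> real^3" where
  "christoffel g p v w =
     (\<chi> k. (1/2) * (\<Sum>l\<in>UNIV. matrix_inv (metric_matrix g p) $ k $ l *
        (metric_deriv g p v w (axis l 1) + metric_deriv g p w v (axis l 1)
         - metric_deriv g p (axis l 1) v w)))"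

definition lc_deriv :: "metric3 \<Rightarrow> (real^3 \<Rightarrow> real^3) \<Rightarrow> real^3 \<Rightarrow> real^3 \<Rightarrow> real^3" where
  "lc_deriv g E p v = frechet_derivative E (at p) v + christoffel g p v (E p)"

definition metric_cross :: "metric3 \<Rightarrow> real^3 \<Rightarrow> real^3 \<Rightarrow> real^3 \<Rightarrow> real^3" where
  "metric_cross g p a b =
     (THE c. g p c a = 0 \<and> g p c b = 0 \<and>
             g p c c = g p a a * g p b b - (g p a b)\<^sup>2 \<and>
             (\<not> dependent {a, b} \<and> a \<noteq> b \<longrightarrow> det (vector [a, b, c] :: real^3^3) > 0))"

definition surf_partial :: "(real^2 \<Rightarrow> real^3) \<Rightarrow> real^2 \<Rightarrow> 2 \<Rightarrow> real^3" where
  "surf_partial r x i = frechet_derivative r (at x) (axis i 1)"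

end

theory Submission
  imports Defs
begin

text \<open>In Euclidean coordinates the warped metric is \<open>g\<^sub>p(v, w) = v \<bullet> w + \<phi>(|p|) (p \<bullet> v)(p \<bullet> w)\<close>,
  a radial correction of the Euclidean metric. Hence \<open>g(u, \<Gamma>(v, w))\<close> is a multiple of \<open>p \<bullet> u\<close>,
  and for a rotation field \<open>E z = e \<times> z\<close>, whose Euclidean derivative is skew and which is tangent
  to the spheres \<open>|p| = const\<close>, the radial corrections to the Killing equation cancel in pairs.
  That equation holds for arbitrary tangent vectors. For the second claim, \<open>X = r f(r) \<partial>\<^sub>r\<close> is \<open>f(|z|) z\<close> in Euclidean coordinates: on
  \<open>z\<^sup>\<bottom>\<close> the warped metric is Euclidean and \<open>g(X, X) = |z|\<^sup>2\<close>, so the conditions defining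
  \<open>\<partial>\<^sub>\<alpha> \<times> X\<close> become the Euclidean ones characterising \<open>\<partial>\<^sub>\<alpha> \<times>\<^sub>E z\<close>.\<close>

definition radial_coeff :: "(real \<Rightarrow> real) \<Rightarrow> real \<Rightarrow> real" where
  "radial_coeff f s = 1 / (f s)\<^sup>2 / s\<^sup>2 - 1 / s\<^sup>2"

lemma warped_metric_eq:
  "warped_metric f p v w = radial_coeff f (norm p) * ((p \<bullet> v) * (p \<bullet> w)) + v \<bullet> w"
  unfolding warped_metric_def radial_coeff_def by (simp add: divide_inverse algebra_simps)

lemma radial_coeff_mult_sq:
  assumes "s \<noteq> 0"
  shows "radial_coeff f s * s\<^sup>2 + 1 = 1 / (f s)\<^sup>2"
  using assms unfolding radial_coeff_def by (simp add: field_simps)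

lemma warped_metric_add_right:
  "warped_metric f p u (v + w) = warped_metric f p u v + warped_metric f p u w"
  by (simp add: warped_metric_eq inner_add_right algebra_simps)

lemma warped_metric_orthogonal_left:
  "p \<bullet> v = 0 \<Longrightarrow> warped_metric f p v w = v \<bullet> w"
  by (simp add: warped_metric_eq)

lemma warped_metric_pos:
  assumes "f (norm p) \<noteq> 0" "p \<noteq> 0" "v \<noteq> 0"
  shows "warped_metric f p v v > 0"
proof -
  let ?s = "norm p" and ?F = "f (norm p)"
  have "(p \<bullet> v)\<^sup>2 \<le> ?s\<^sup>2 * (v \<bullet> v)"
    using Cauchy_Schwarz_ineq[of p v] by (simp add: power2_norm_eq_inner)
  then have "v \<bullet> v - (p \<bullet> v)\<^sup>2 / ?s\<^sup>2 \<ge> 0"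
    using assms(2) by (simp add: field_simps)
  moreover have "warped_metric f p v v = (p \<bullet> v)\<^sup>2 / (?F\<^sup>2 * ?s\<^sup>2) + (v \<bullet> v - (p \<bullet> v)\<^sup>2 / ?s\<^sup>2)"
    unfolding warped_metric_eq radial_coeff_def by (simp add: field_simps power2_eq_square)
  moreover have "v \<bullet> v > 0" "?F\<^sup>2 * ?s\<^sup>2 > 0" using assms by auto
  ultimately show ?thesis
    by (cases "p \<bullet> v = 0") (auto intro!: add_pos_nonneg)
qed

lemma warped_metric_matrix_vector:
  "warped_metric f p u v = u \<bullet> (metric_matrix (warped_metric f) p *v v)"
proof -
  have "metric_matrix (warped_metric f) p
      = (\<chi> i j. radial_coeff f (norm p) * (p $ i) * (p $ j) + (if i = j then 1 else 0))"
    unfolding metric_matrix_def warped_metric_eq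
    by (simp add: vec_eq_iff inner_axis inner_axis_axis) (simp add: axis_def)
  then have "metric_matrix (warped_metric f) p *v v = (radial_coeff f (norm p) * (p \<bullet> v)) *\<^sub>R p + v"
    by (simp add: vec_eq_iff forall_3 matrix_vector_mult_def sum_3 inner_vec_def algebra_simps)
  then show ?thesis
    by (simp add: warped_metric_eq inner_add_right algebra_simps inner_commute)
qed

lemma warped_metric_matrix_mult_inv:
  assumes "f (norm p) \<noteq> 0" "p \<noteq> 0"
  shows "metric_matrix (warped_metric f) p ** matrix_inv (metric_matrix (warped_metric f) p) = mat 1"
proof -
  let ?G = "metric_matrix (warped_metric f) p"
  have "?G *v v = 0 \<Longrightarrow> v = 0" for v
    using warped_metric_pos[of f p v] assms warped_metric_matrix_vector[of f p v v] by force
  then have "invertible ?G"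
    using matrix_left_invertible_ker invertible_left_inverse by blast
  then show ?thesis
    unfolding invertible_def matrix_inv_def by (rule someI_ex[THEN conjunct1])
qed

lemma has_derivative_radial_coeff_norm:
  assumes "f field_differentiable (at (norm p))" "f (norm p) \<noteq> 0" "p \<noteq> 0"
  obtains c where "((\<lambda>q. radial_coeff f (norm q)) has_derivative (\<lambda>h. c * (p \<bullet> h))) (at p)"
proof -
  obtain f' where "(f has_field_derivative f') (at (norm p))"
    using assms(1) field_differentiable_def by blast
  then have "\<exists>D. (radial_coeff f has_field_derivative D) (at (norm p))"
    unfolding radial_coeff_def[abs_def]
    by (intro exI) (rule derivative_eq_intros refl | use assms in simp)+
  then obtain D where D: "(radial_coeff f has_field_derivative D) (at (norm p))" ..
  have "(norm has_derivative (\<lambda>h. h \<bullet> sgn p)) (at p)"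
    using has_derivative_norm[of p] assms(3) by simp
  from has_derivative_compose[OF this D[unfolded has_field_derivative_def]]
  have "((\<lambda>q. radial_coeff f (norm q)) has_derivative (\<lambda>h. (D / norm p) * (p \<bullet> h))) (at p)"
    by (simp add: o_def sgn_div_norm inner_commute divide_inverse mult.assoc)
  then show ?thesis by (rule that)
qed

lemma metric_deriv_warped_metric:
  assumes "f field_differentiable (at (norm p))" "f (norm p) \<noteq> 0" "p \<noteq> 0"
  obtains c where "\<And>h a b. metric_deriv (warped_metric f) p h a b
     = c * (p \<bullet> h) * ((p \<bullet> a) * (p \<bullet> b))
       + radial_coeff f (norm p) * ((h \<bullet> a) * (p \<bullet> b) + (p \<bullet> a) * (h \<bullet> b))"
proof -
  obtain c where c: "((\<lambda>q. radial_coeff f (norm q)) has_derivative (\<lambda>h. c * (p \<bullet> h))) (at p)"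
    using has_derivative_radial_coeff_norm assms by blast
  have inner_const: "((\<lambda>q. q \<bullet> a) has_derivative (\<lambda>h. h \<bullet> a)) (at p)" for a :: "real^3"
    using has_derivative_inner[OF has_derivative_ident has_derivative_const[of a]] by simp
  have d: "((\<lambda>q. warped_metric f q a b) has_derivative
      (\<lambda>h. radial_coeff f (norm p) * ((p \<bullet> a) * (h \<bullet> b) + (h \<bullet> a) * (p \<bullet> b))
           + c * (p \<bullet> h) * ((p \<bullet> a) * (p \<bullet> b)) + 0)) (at p)" for a b
    unfolding warped_metric_eq
    by (intro has_derivative_add has_derivative_mult c inner_const has_derivative_const)
  show ?thesis
    by (rule that[of c]) (simp add: metric_deriv_def frechet_derivative_at[OF d, symmetric] algebra_simps)
qed

lemma christoffel_warped_metric: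
  assumes "f field_differentiable (at (norm p))" "f (norm p) \<noteq> 0" "p \<noteq> 0"
  obtains c where "\<And>u v w. warped_metric f p u (christoffel (warped_metric f) p v w)
     = (c * (p \<bullet> v) * (p \<bullet> w) + radial_coeff f (norm p) * (v \<bullet> w)) * (p \<bullet> u)"
proof -
  obtain c where c: "\<And>h a b. metric_deriv (warped_metric f) p h a b
     = c * (p \<bullet> h) * ((p \<bullet> a) * (p \<bullet> b))
       + radial_coeff f (norm p) * ((h \<bullet> a) * (p \<bullet> b) + (p \<bullet> a) * (h \<bullet> b))"
    using metric_deriv_warped_metric assms by blast
  let ?G = "metric_matrix (warped_metric f) p"
  let ?\<Gamma> = "\<lambda>v w. c/2 * (p \<bullet> v) * (p \<bullet> w) + radial_coeff f (norm p) * (v \<bullet> w)"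
  have "metric_deriv (warped_metric f) p v w (axis l 1) + metric_deriv (warped_metric f) p w v (axis l 1)
      - metric_deriv (warped_metric f) p (axis l 1) v w = 2 * ?\<Gamma> v w * p $ l" for v w l
    by (simp add: c inner_axis inner_axis' inner_commute algebra_simps)
  then have "christoffel (warped_metric f) p v w = matrix_inv ?G *v (?\<Gamma> v w *\<^sub>R p)" for v w
    unfolding christoffel_def
    by (simp add: vec_eq_iff matrix_vector_mult_def sum_distrib_left algebra_simps)
  then have "warped_metric f p u (christoffel (warped_metric f) p v w) = ?\<Gamma> v w * (p \<bullet> u)" for u v w
    using warped_metric_matrix_mult_inv[of f p] assms
    by (simp add: warped_metric_matrix_vector[of f p u] matrix_vector_mul_assoc inner_commute)
  then show ?thesis by (rule that)
qed

lemma frechet_derivative_cross3: "frechet_derivative (\<lambda>z. cross3 e z) (at p) v = cross3 e v"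
proof -
  have "linear (\<lambda>z. cross3 e z)"
    using bilinear_cross unfolding bilinear_def by blast
  then have "((\<lambda>z. cross3 e z) has_derivative (\<lambda>z. cross3 e z)) (at p)"
    by (rule linear_imp_has_derivative)
  then show ?thesis by (metis frechet_derivative_at)
qed

lemma warped_metric_killing_cross3:
  assumes "f field_differentiable (at (norm p))" "f (norm p) \<noteq> 0" "p \<noteq> 0"
  shows "warped_metric f p u (lc_deriv (warped_metric f) (\<lambda>z. cross3 e z) p v)
       + warped_metric f p v (lc_deriv (warped_metric f) (\<lambda>z. cross3 e z) p u) = 0"
proof -
  obtain c where c: "\<And>u v w. warped_metric f p u (christoffel (warped_metric f) p v w)
     = (c * (p \<bullet> v) * (p \<bullet> w) + radial_coeff f (norm p) * (v \<bullet> w)) * (p \<bullet> u)"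
    using christoffel_warped_metric assms by blast
  have tangent: "p \<bullet> cross3 e p = 0" by (simp add: dot_cross_self)
  have skew: "w \<bullet> cross3 e v = - (v \<bullet> cross3 e w)" for v w by (simp add: cross3_simps)
  show ?thesis
    unfolding lc_deriv_def frechet_derivative_cross3 warped_metric_add_right c
    by (simp add: warped_metric_eq tangent skew[of u p] skew[of v p] skew[of u v] algebra_simps)
qed

lemma independent_pair_iff_cross3_nonzero:
  fixes a b :: "real^3"
  shows "(\<not> dependent {a, b} \<and> a \<noteq> b) \<longleftrightarrow> cross3 a b \<noteq> 0"
proof -
  have "cross3 a b = 0 \<longleftrightarrow> b = 0 \<or> (\<exists>c. a = c *\<^sub>R b)"
    unfolding cross_eq_0 insert_commute[of a] collinear_lemma
    by (metis scaleR_zero_left)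
  moreover have "(\<not> dependent {a, b} \<and> a \<noteq> b) \<longleftrightarrow> b \<noteq> 0 \<and> \<not> (\<exists>c. a = c *\<^sub>R b)"
    by (auto simp: independent_insert span_singleton) (metis scaleR_one)
  ultimately show ?thesis by blast
qed

lemma cross3_unique:
  fixes a b c :: "real^3"
  assumes "c \<bullet> a = 0" "c \<bullet> b = 0" "c \<bullet> c = cross3 a b \<bullet> cross3 a b"
    and "cross3 a b \<noteq> 0 \<Longrightarrow> cross3 a b \<bullet> c > 0"
  shows "c = cross3 a b"
proof -
  let ?n = "cross3 a b"
  have "cross3 c ?n = 0" using assms(1,2) by (simp add: Lagrange)
  then have par: "(?n \<bullet> ?n) *\<^sub>R c = (?n \<bullet> c) *\<^sub>R ?n"
    using Lagrange[of ?n ?n c] by (simp add: cross_skew[of c])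
  show ?thesis
  proof (cases "?n = 0")
    case True
    then show ?thesis using assms(3) by simp
  next
    case False
    define k where "k = (?n \<bullet> c) / (?n \<bullet> ?n)"
    have nn: "?n \<bullet> ?n > 0" using False by simp
    have ck: "c = k *\<^sub>R ?n"
      using arg_cong[OF par, of "scaleR (1 / (?n \<bullet> ?n))"] nn by (simp add: k_def)
    have "k\<^sup>2 = 1" using assms(3) nn by (simp add: ck power2_eq_square)
    moreover have "k > 0" using assms(4)[OF False] nn by (simp add: ck zero_less_mult_iff)
    ultimately show ?thesis using ck by (simp add: power2_eq_1_iff)
  qed
qed

lemma metric_cross_eqI:
  assumes "g p c a = 0" "g p c b = 0" "g p c c = g p a a * g p b b - (g p a b)\<^sup>2"
    and "\<not> dependent {a, b} \<and> a \<noteq> b \<Longrightarrow> det (vector [a, b, c] :: real^3^3) > 0"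
    and "\<And>c'. g p c' a = 0 \<Longrightarrow> g p c' b = 0 \<Longrightarrow> g p c' c' = g p a a * g p b b - (g p a b)\<^sup>2
      \<Longrightarrow> (\<not> dependent {a, b} \<and> a \<noteq> b \<Longrightarrow> det (vector [a, b, c'] :: real^3^3) > 0) \<Longrightarrow> c' = c"
  shows "metric_cross g p a b = c"
  unfolding metric_cross_def by (rule the_equality) (use assms in blast)+

lemma metric_cross_warped_metric:
  assumes "f (norm z) > 0" "z \<noteq> 0"
  shows "metric_cross (warped_metric f) z e (f (norm z) *\<^sub>R z) = cross3 e z"
proof -
  define F where "F = f (norm z)"
  let ?g = "warped_metric f z" and ?b = "F *\<^sub>R z" and ?n = "cross3 e z"
  have F: "F > 0" using assms(1) by (simp add: F_def)
  have coeff: "radial_coeff f (norm z) * (z \<bullet> z) + 1 = 1 / F\<^sup>2"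
    using radial_coeff_mult_sq[of "norm z" f] assms(2) by (simp add: F_def power2_norm_eq_inner)
  have g_b: "?g x ?b = (z \<bullet> x) / F" for x
  proof -
    have "?g x ?b = F * (z \<bullet> x) * (radial_coeff f (norm z) * (z \<bullet> z) + 1)"
      by (simp add: warped_metric_eq algebra_simps inner_commute)
    then show ?thesis using F by (simp add: coeff power2_eq_square)
  qed
  have g_orth: "?g x y = x \<bullet> y" if "z \<bullet> x = 0" for x y
    using that by (simp add: warped_metric_orthogonal_left)
  have gram: "?g e e * ?g ?b ?b - (?g e ?b)\<^sup>2 = ?n \<bullet> ?n"
  proof -
    let ?\<phi> = "radial_coeff f (norm z)"
    have "?g e e = ?\<phi> * (z \<bullet> e)\<^sup>2 + e \<bullet> e"
      by (simp add: warped_metric_eq power2_eq_square)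
    moreover have "?g ?b ?b = z \<bullet> z"
      using g_b[of ?b] F by (simp add: power2_eq_square)
    moreover have "(?g e ?b)\<^sup>2 = (z \<bullet> e)\<^sup>2 * (?\<phi> * (z \<bullet> z) + 1)"
      unfolding g_b coeff by (simp add: power_divide)
    ultimately have "?g e e * ?g ?b ?b - (?g e ?b)\<^sup>2 = (e \<bullet> e) * (z \<bullet> z) - (e \<bullet> z)\<^sup>2"
      by (simp add: algebra_simps inner_commute)
    also have "\<dots> = ?n \<bullet> ?n"
      unfolding dot_cross by (simp add: power2_eq_square inner_commute)
    finally show ?thesis .
  qed
  have det: "det (vector [e, ?b, c] :: real^3^3) = F * (?n \<bullet> c)" for c
    by (metis cross_triple dot_cross_det cross_mult_right inner_commute inner_scaleR_left)
  have indep: "(\<not> dependent {e, ?b} \<and> e \<noteq> ?b) \<longleftrightarrow> ?n \<noteq> 0"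
    using independent_pair_iff_cross3_nonzero[of e ?b] F by (simp add: cross_mult_right)
  show ?thesis
    unfolding F_def[symmetric]
  proof (rule metric_cross_eqI)
    have "z \<bullet> ?n = 0" by (simp add: dot_cross_self)
    then show "?g ?n e = 0" "?g ?n ?b = 0" "?g ?n ?n = ?g e e * ?g ?b ?b - (?g e ?b)\<^sup>2"
      using g_orth g_b gram by (simp_all add: dot_cross_self)
    show "det (vector [e, ?b, ?n] :: real^3^3) > 0" if "\<not> dependent {e, ?b} \<and> e \<noteq> ?b"
      using that indep det F by simp
  next
    fix c
    assume c: "?g c e = 0" "?g c ?b = 0" "?g c c = ?g e e * ?g ?b ?b - (?g e ?b)\<^sup>2"
      and oriented: "\<not> dependent {e, ?b} \<and> e \<noteq> ?b \<Longrightarrow> det (vector [e, ?b, c] :: real^3^3) > 0"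
    have "z \<bullet> c = 0" using c(2) g_b F by simp
    then show "c = ?n"
      using c g_orth gram oriented indep det F
      by (intro cross3_unique) (auto simp: inner_commute zero_less_mult_iff)
  qed
qed

theorem lemma8:
  fixes f :: "real \<Rightarrow> real" and I :: "real set"
    and r :: "real^2 \<Rightarrow> real^3" and S :: "(real^2) set" and \<alpha> :: 3
  assumes "open I" and "I \<subseteq> {0<..}"
    and "\<forall>n. \<forall>t\<in>I. (deriv ^^ n) f field_differentiable (at t)"
    and "\<forall>t\<in>I. f t > 0"
    and "open S"
    and "\<forall>x\<in>S. r differentiable (at x)"
    and "\<forall>x\<in>S. inj (frechet_derivative r (at x))"
    and "\<forall>x\<in>S. norm (r x) \<in> I"
  shows "(\<forall>x\<in>S. \<forall>i j.
            warped_metric f (r x) (surf_partial r x i)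
               (lc_deriv (warped_metric f) (\<lambda>z. cross3 (axis \<alpha> 1) z) (r x) (surf_partial r x j))
          + warped_metric f (r x) (surf_partial r x j)
               (lc_deriv (warped_metric f) (\<lambda>z. cross3 (axis \<alpha> 1) z) (r x) (surf_partial r x i))
          = 0)
      \<and> (\<forall>z. norm z \<in> I \<longrightarrow>
            cross3 (axis \<alpha> 1) z
            = metric_cross (warped_metric f) z (axis \<alpha> 1) (f (norm z) *\<^sub>R z))"
proof -
  have differentiable: "f field_differentiable (at t)" if "t \<in> I" for t
    using assms(3) that by (metis funpow_0)
  have admissible: "z \<noteq> 0 \<and> f (norm z) > 0" if "norm z \<in> I" for z :: "real^3"
    using assms(2,4) that by fastforce
  show ?thesis
  proof (intro conjI ballI allI impI)
    fix x i j assume "x \<in> S"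
    with assms(8) have "norm (r x) \<in> I" by blast
    then show "warped_metric f (r x) (surf_partial r x i)
               (lc_deriv (warped_metric f) (\<lambda>z. cross3 (axis \<alpha> 1) z) (r x) (surf_partial r x j))
          + warped_metric f (r x) (surf_partial r x j)
               (lc_deriv (warped_metric f) (\<lambda>z. cross3 (axis \<alpha> 1) z) (r x) (surf_partial r x i))
          = 0"
      using warped_metric_killing_cross3 differentiable admissible by force
  next
    fix z :: "real^3" assume "norm z \<in> I"
    then show "cross3 (axis \<alpha> 1) z = metric_cross (warped_metric f) z (axis \<alpha> 1) (f (norm z) *\<^sub>R z)"
      using metric_cross_warped_metric admissible by simp
  qed
qed

end
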